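(* Let $m \ge 2$, let $\varepsilon \le \frac{1}{2^{3m}\cdot 4m}$ be a power of 2, and let $\mathcal{G} = \{2^{-i}\varepsilon j : i \in \mathbb{Z},\ j \in \{1,\dots,2/\varepsilon^2 - 1\}\} \cap (0,1)$. Suppose $z, x_1,\dots,x_m \in \mathcal{G}$, let $M = \max_i x_i$, and suppose $\varepsilon M \le z \le \min_i x_i$. Then there exist $a_1,\dots,a_m,b_1,\dots,b_m$ such that for every $i$: (i) $a_i, b_i \in \mathcal{G} \cup \{0\}$; (ii) $x_i = z + a_i + b_i$; (iii) each of $a_i, b_i$ is either $0$ or at least $\varepsilon^3 M/2$; and (iv) $a_i \le \varepsilon z$. *)

theory Defs
  imports Complex_Main
begin

definition grid :: "real \<Rightarrow> real set" where
  "grid \<epsilon> = {y. \<exists>(i::int) (j::nat). 1 \<le> j \<and> real j \<le> 2 / \<epsilon>^2 - 1 \<and>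
                    y = (2::real) powi (- i) * \<epsilon> * real j} \<inter> {0<..<1}"

end

theory Submission
  imports Defs
begin

text \<open>Put \<open>N = 2 / \<epsilon>\<^sup>2\<close>, a power of 2, so that the grid consists of the numbers \<open>2\<^sup>t j\<close>
  in \<open>(0,1)\<close> with \<open>0 < j < N\<close>. Write \<open>x\<^sub>i\<close> and \<open>z\<close> as integer multiples of a common unit
  \<open>u = 2\<^sup>t\<close>; since their mantissas are below \<open>N\<close> and both are at least \<open>\<epsilon> M\<close>, we get
  \<open>u \<ge> \<epsilon>\<^sup>3 M / 2\<close>. Split \<open>x\<^sub>i - z = u D\<close> at a power of two \<open>p\<close> with \<open>u p \<le> \<epsilon> z < 2 u p\<close>
  (or \<open>p = 1\<close> if \<open>u > \<epsilon> z\<close>): \<open>a\<^sub>i = u (D mod p)\<close> and \<open>b\<^sub>i = u p (D div p)\<close>. Then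
  \<open>a\<^sub>i < u p \<le> \<epsilon> z\<close>, both digits \<open>D mod p\<close> and \<open>D div p\<close> stay below \<open>N\<close>, so \<open>a\<^sub>i\<close> and
  \<open>b\<^sub>i\<close> are grid points or 0, and being nonzero multiples of \<open>u\<close> they are at least \<open>\<epsilon>\<^sup>3 M / 2\<close>.\<close>

lemma power_int_split_nat:
  fixes b :: real
  assumes "b \<noteq> 0" and "s \<le> t"
  shows "b powi t = b powi s * b ^ nat (t - s)"
proof -
  have "b powi t = b powi (s + int (nat (t - s)))"
    using assms(2) by simp
  also have "\<dots> = b powi s * b ^ nat (t - s)"
    using assms(1) by (subst power_int_add) (auto simp: power_int_nonneg_exp)
  finally show ?thesis .
qed

lemma power_int_neg_mult:
  fixes b :: real
  assumes "b \<noteq> 0"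
  shows "b powi (- i) * b powi k = b powi (k - i)"
  using power_int_add[of b "- i" k] assms by simp

lemma exists_power_of_two_scale:
  fixes u c :: real
  assumes "0 < u" and "0 \<le> c"
  obtains n :: nat where "c < 2 * (u * 2 ^ n)" and "n = 0 \<or> u * 2 ^ n \<le> c"
proof (cases "c < u")
  case True
  then show ?thesis using that[of 0] assms by simp
next
  case False
  obtain n0 :: nat where "c / u < 2 ^ n0"
    using real_arch_pow[of 2 "c / u"] by auto
  then have "\<exists>n::nat. c < u * 2 ^ n"
    using assms(1) by (auto simp: field_simps)
  then have above: "c < u * 2 ^ (LEAST n. c < u * 2 ^ n)"
    by (rule LeastI_ex)
  with False obtain n where n: "(LEAST n. c < u * 2 ^ n) = Suc n"
    by (cases "LEAST n. c < u * 2 ^ n") auto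
  then have "\<not> c < u * 2 ^ n"
    using not_less_Least[of n "\<lambda>n. c < u * 2 ^ n"] by simp
  with above n show ?thesis
    using that[of n] by simp
qed

lemma less_mult_mantissa_bound:
  fixes y c :: real
  assumes "y = c * real J" and "J < N" and "0 < y"
  shows "y < c * real N"
proof -
  have "0 < c"
    using assms(1,3) zero_less_mult_pos2 by fastforce
  then show ?thesis
    using assms(1,2) by simp
qed

lemma bchoice2:
  assumes "\<forall>x\<in>S. \<exists>y z. Q x y z"
  shows "\<exists>f g. \<forall>x\<in>S. Q x (f x) (g x)"
proof -
  obtain f where "\<forall>x\<in>S. \<exists>z. Q x (f x) z"
    using bchoice[OF assms] by blast
  then obtain g where "\<forall>x\<in>S. Q x (f x) (g x)"
    using bchoice[of S "\<lambda>x. Q x (f x)"] by blast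
  then show ?thesis by blast
qed

lemma two_div_square_eq_power_of_two:
  assumes "\<epsilon> = (2::real) powi k" and "\<epsilon> \<le> 1"
  shows "real (2 ^ nat (1 - 2 * k) :: nat) = 2 / \<epsilon>^2"
proof -
  have "k \<le> 0"
  proof (rule ccontr)
    assume "\<not> k \<le> 0"
    then have "(2::real) powi 1 \<le> 2 powi k"
      by (intro power_int_increasing) auto
    with assms show False by simp
  qed
  then have "real (2 ^ nat (1 - 2 * k) :: nat) = (2::real) powi (1 - 2 * k)"
    by (simp add: power_int_def)
  also have "\<dots> = 2 powi 1 / 2 powi (k * 2)"
    by (subst power_int_diff) (auto simp: mult.commute)
  also have "\<dots> = 2 / \<epsilon>^2"
    by (simp add: assms(1) power_int_mult)
  finally show ?thesis .
qed

lemma grid_memI: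
  assumes "\<epsilon> = (2::real) powi k" and "real N = 2 / \<epsilon>^2"
    and "0 < j" and "j < N" and "y = 2 powi t * real j" and "y < 1"
  shows "y \<in> grid \<epsilon>"
proof -
  have "y = 2 powi (- (k - t)) * \<epsilon> * real j"
    using assms(1,5) power_int_neg_mult[of 2 "k - t" k] by simp
  moreover have "0 < y" using assms(3,5) by simp
  ultimately show ?thesis
    unfolding grid_def using assms(2-4,6)
    by (intro IntI CollectI exI[of _ "k - t"] exI[of _ j]) auto
qed

lemma grid_memE:
  assumes "\<epsilon> = (2::real) powi k" and "real N = 2 / \<epsilon>^2" and "y \<in> grid \<epsilon>"
  obtains t j where "0 < j" "j < N" "y = 2 powi t * real j" "0 < y" "y < 1"
proof -
  obtain i j where "1 \<le> j" "real j \<le> 2 / \<epsilon>^2 - 1" "y = 2 powi (- i) * \<epsilon> * real j" "0 < y" "y < 1"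
    using assms(3) unfolding grid_def by auto
  with assms(2) that[of j "k - i"] show thesis
    using assms(1) power_int_neg_mult[of 2 i k] by fastforce
qed

lemma grid_multiple_of_power_of_two:
  assumes "\<epsilon> = (2::real) powi k" and "real N = 2 / \<epsilon>^2"
    and "q < N" and "2 powi s * real q < 1" and "L \<le> 2 powi s"
  shows "2 powi s * real q \<in> grid \<epsilon> \<union> {0}"
    and "2 powi s * real q = 0 \<or> L \<le> 2 powi s * real q"
proof -
  have "2 powi s * real q \<in> grid \<epsilon>" and "L \<le> 2 powi s * real q" if "0 < q"
  proof -
    show "2 powi s * real q \<in> grid \<epsilon>"
      using grid_memI[OF assms(1,2) that assms(3)] assms(4) by blast
    have "(2::real) powi s \<le> 2 powi s * real q"
      using that by simp
    with assms(5) show "L \<le> 2 powi s * real q" by linarith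
  qed
  then show "2 powi s * real q \<in> grid \<epsilon> \<union> {0}"
    and "2 powi s * real q = 0 \<or> L \<le> 2 powi s * real q"
    by (cases "q = 0"; simp)+
qed

lemma grid_size_cancel:
  assumes "real N = 2 / \<epsilon>^2" and "\<epsilon> \<noteq> (0::real)"
  shows "real N * (\<epsilon>^2 * y / 2) = y"
  using assms by (simp add: field_simps)

lemma grid_common_unit:
  assumes "\<epsilon> = (2::real) powi k" and "real N = 2 / \<epsilon>^2"
    and "z \<in> grid \<epsilon>" and "x \<in> grid \<epsilon>" and "\<epsilon> * M \<le> z" and "z \<le> x"
  obtains t X Z where "x = 2 powi t * real X" and "z = 2 powi t * real Z"
    and "\<epsilon>^3 * M / 2 \<le> 2 powi t"
proof -
  obtain tx X where X: "0 < X" "X < N" "x = 2 powi tx * real X"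
    using grid_memE[OF assms(1,2,4)] by blast
  obtain tz Z where Z: "0 < Z" "Z < N" "z = 2 powi tz * real Z" and "0 < z"
    using grid_memE[OF assms(1,2,3)] by blast
  define t where "t = min tx tz"
  have scale: "\<epsilon>^3 * M / 2 * real N = \<epsilon> * M"
    using grid_size_cancel[OF assms(2), of "\<epsilon> * M"] assms(1)
    by (simp add: power3_eq_cube power2_eq_square ac_simps)
  have "z < 2 powi tz * real N" and "x < 2 powi tx * real N"
    using less_mult_mantissa_bound[OF Z(3) Z(2) \<open>0 < z\<close>]
      less_mult_mantissa_bound[OF X(3) X(2)] \<open>0 < z\<close> \<open>z \<le> x\<close> by simp_all
  then have "\<epsilon>^3 * M / 2 < 2 powi tz" and "\<epsilon>^3 * M / 2 < 2 powi tx"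
    using scale \<open>\<epsilon> * M \<le> z\<close> \<open>z \<le> x\<close> mult_right_less_imp_less[of "\<epsilon>^3 * M / 2" "real N"]
    by (metis le_less_trans of_nat_0_le_iff)+
  then have "\<epsilon>^3 * M / 2 \<le> 2 powi t"
    unfolding t_def by (simp add: min_def)
  moreover have "x = 2 powi t * real (X * 2 ^ nat (tx - t))"
    and "z = 2 powi t * real (Z * 2 ^ nat (tz - t))"
    using power_int_split_nat[of 2 t tx] power_int_split_nat[of 2 t tz] X(3) Z(3)
    by (simp_all add: t_def)
  ultimately show thesis using that by blast
qed

lemma low_digit_bounds:
  assumes N: "real N = 2 / \<epsilon>^2" and "0 < \<epsilon>" and "0 < u" and "0 < z" and "z \<le> M"
    and unit: "\<epsilon>^3 * M / 2 \<le> u" and scale: "n = 0 \<or> u * 2 ^ n \<le> \<epsilon> * z"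
  shows "D mod 2 ^ n < N" and "u * real (D mod 2 ^ n) \<le> \<epsilon> * z"
proof -
  have "D mod 2 ^ n < 2 ^ n"
    by simp
  then have "real (D mod 2 ^ n) \<le> 2 ^ n"
    by simp
  then have mod_le: "u * real (D mod 2 ^ n) \<le> u * 2 ^ n"
    using \<open>0 < u\<close> by simp
  show "u * real (D mod 2 ^ n) \<le> \<epsilon> * z"
    using scale mod_le \<open>0 < \<epsilon>\<close> \<open>0 < z\<close> by auto
  show "D mod 2 ^ n < N"
  proof (cases "n = 0")
    case True
    have "0 < real N"
      using N \<open>0 < \<epsilon>\<close> by simp
    with True show ?thesis by simp
  next
    case False
    then have "2 ^ n * u \<le> \<epsilon> * z"
      using scale by (simp add: mult.commute)
    also have "\<dots> \<le> \<epsilon> * M"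
      using \<open>z \<le> M\<close> \<open>0 < \<epsilon>\<close> by simp
    also have "\<dots> = real N * (\<epsilon>^2 * (\<epsilon> * M) / 2)"
      using grid_size_cancel[OF N] \<open>0 < \<epsilon>\<close> by simp
    also have "\<dots> \<le> real N * u"
      using unit by (intro mult_left_mono) (auto simp: power3_eq_cube power2_eq_square)
    finally have "2 ^ n \<le> N"
      using \<open>0 < u\<close> by simp
    with \<open>D mod 2 ^ n < 2 ^ n\<close> show ?thesis
      by linarith
  qed
qed

lemma high_digit_bound:
  assumes N: "real N = 2 / \<epsilon>^2" and "0 < \<epsilon>" and "0 < u"
    and "\<epsilon> * M \<le> z" and scale: "\<epsilon> * z < 2 * (u * 2 ^ n)" and "u * real D < M"
  shows "D div 2 ^ n < N"
proof -
  have "\<epsilon>^2 * M \<le> \<epsilon> * z"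
    using mult_left_mono[OF \<open>\<epsilon> * M \<le> z\<close>, of \<epsilon>] \<open>0 < \<epsilon>\<close> by (simp add: power2_eq_square mult.assoc)
  with scale have "\<epsilon>^2 * M / 2 \<le> u * 2 ^ n"
    by simp
  have "D div 2 ^ n * 2 ^ n \<le> D"
    by (rule div_times_less_eq_dividend)
  then have "real (D div 2 ^ n * 2 ^ n) \<le> real D"
    by (simp only: of_nat_le_iff)
  then have "real (D div 2 ^ n) * 2 ^ n \<le> real D"
    by simp
  then have "real (D div 2 ^ n) * (u * 2 ^ n) \<le> u * real D"
    using \<open>0 < u\<close> mult_left_mono[of _ _ u] by (simp add: algebra_simps)
  also have "\<dots> < M" by fact
  also have "\<dots> = real N * (\<epsilon>^2 * M / 2)"
    using grid_size_cancel[OF N] \<open>0 < \<epsilon>\<close> by simp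
  also have "\<dots> \<le> real N * (u * 2 ^ n)"
    using \<open>\<epsilon>^2 * M / 2 \<le> u * 2 ^ n\<close> by (intro mult_left_mono) auto
  finally show ?thesis
    using \<open>0 < u\<close> by simp
qed

lemma grid_split_at_common_unit:
  assumes e: "\<epsilon> = (2::real) powi k" and N: "real N = 2 / \<epsilon>^2"
    and x: "x = 2 powi t * real X" and z: "z = 2 powi t * real Z"
    and unit: "\<epsilon>^3 * M / 2 \<le> 2 powi t"
    and "\<epsilon> * M \<le> z" and "z \<le> x" and "x \<le> M" and "0 < z" and "x < 1"
  shows "\<exists>a b. a \<in> grid \<epsilon> \<union> {0} \<and> b \<in> grid \<epsilon> \<union> {0} \<and> x = z + a + b \<and>
           (a = 0 \<or> \<epsilon>^3 * M / 2 \<le> a) \<and> (b = 0 \<or> \<epsilon>^3 * M / 2 \<le> b) \<and> a \<le> \<epsilon> * z"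
proof -
  define u :: real where "u = 2 powi t"
  have "0 < u" and "0 < \<epsilon>"
    using e by (simp_all add: u_def)
  obtain n where n_low: "\<epsilon> * z < 2 * (u * 2 ^ n)" and n_high: "n = 0 \<or> u * 2 ^ n \<le> \<epsilon> * z"
    using exists_power_of_two_scale[of u "\<epsilon> * z"] \<open>0 < u\<close> \<open>0 < \<epsilon>\<close> \<open>0 < z\<close> by auto
  define D where "D = X - Z"
  have diff: "x - z = u * real D"
    using \<open>z \<le> x\<close> x z by (simp add: D_def u_def right_diff_distrib)
  define a where "a = u * real (D mod 2 ^ n)"
  define b where "b = 2 powi (t + int n) * real (D div 2 ^ n)"
  have high_unit: "2 powi (t + int n) = u * 2 ^ n"
    by (simp add: u_def power_int_add)
  have "x = z + a + b"
  proof -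
    have "real D = real (D mod 2 ^ n + 2 ^ n * (D div 2 ^ n))"
      by (simp only: mod_mult_div_eq)
    then have "real D = real (D mod 2 ^ n) + 2 ^ n * real (D div 2 ^ n)"
      by (simp only: of_nat_add of_nat_mult of_nat_power of_nat_numeral)
    then show ?thesis
      using diff by (simp add: a_def b_def high_unit algebra_simps)
  qed
  moreover have "0 \<le> a" and "0 \<le> b"
    using \<open>0 < u\<close> by (simp_all add: a_def b_def)
  ultimately have "a < 1" and "b < 1"
    using \<open>0 < z\<close> \<open>x < 1\<close> by linarith+
  have "z \<le> M"
    using \<open>z \<le> x\<close> \<open>x \<le> M\<close> by linarith
  have low: "D mod 2 ^ n < N" "a \<le> \<epsilon> * z"
    using low_digit_bounds[OF N \<open>0 < \<epsilon>\<close> \<open>0 < u\<close> \<open>0 < z\<close> \<open>z \<le> M\<close> _ n_high] unit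
    by (simp_all add: a_def u_def)
  have "u * real D < M"
    using diff \<open>0 < z\<close> \<open>x \<le> M\<close> by linarith
  then have "D div 2 ^ n < N"
    by (rule high_digit_bound[OF N \<open>0 < \<epsilon>\<close> \<open>0 < u\<close> \<open>\<epsilon> * M \<le> z\<close> n_low])
  have "u \<le> u * 2 ^ n"
    using \<open>0 < u\<close> by simp
  then have "\<epsilon>^3 * M / 2 \<le> 2 powi (t + int n)"
    using unit high_unit unfolding u_def by linarith
  then show ?thesis
    using grid_multiple_of_power_of_two[OF e N low(1), of t "\<epsilon>^3 * M / 2"]
      grid_multiple_of_power_of_two[OF e N \<open>D div 2 ^ n < N\<close>, of "t + int n" "\<epsilon>^3 * M / 2"]
      \<open>x = z + a + b\<close> low(2) unit \<open>a < 1\<close> \<open>b < 1\<close>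
    unfolding a_def b_def u_def by blast
qed

lemma grid_split:
  assumes e: "\<epsilon> = (2::real) powi k" and N: "real N = 2 / \<epsilon>^2"
    and "z \<in> grid \<epsilon>" and "x \<in> grid \<epsilon>"
    and "\<epsilon> * M \<le> z" and "z \<le> x" and "x \<le> M"
  shows "\<exists>a b. a \<in> grid \<epsilon> \<union> {0} \<and> b \<in> grid \<epsilon> \<union> {0} \<and> x = z + a + b \<and>
           (a = 0 \<or> \<epsilon>^3 * M / 2 \<le> a) \<and> (b = 0 \<or> \<epsilon>^3 * M / 2 \<le> b) \<and> a \<le> \<epsilon> * z"
proof -
  obtain t X Z where unit: "x = 2 powi t * real X" "z = 2 powi t * real Z" "\<epsilon>^3 * M / 2 \<le> 2 powi t"
    using grid_common_unit[OF e N assms(3-6)] .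
  have "0 < z" and "x < 1"
    using assms(3,4) by (simp_all add: grid_def)
  then show ?thesis
    using grid_split_at_common_unit[OF e N unit assms(5-7)] by blast
qed

theorem claim7:
  fixes m :: nat and \<epsilon> z :: real and x :: "nat \<Rightarrow> real"
  assumes "m \<ge> 2"
    and "\<epsilon> \<le> 1 / (2^(3*m) * (4 * real m))"
    and "\<exists>k::int. \<epsilon> = (2::real) powi k"
    and "z \<in> grid \<epsilon>"
    and "\<forall>i\<in>{1..m}. x i \<in> grid \<epsilon>"
    and "\<epsilon> * Max (x ` {1..m}) \<le> z"
    and "z \<le> Min (x ` {1..m})"
  shows "\<exists>a b :: nat \<Rightarrow> real. \<forall>i\<in>{1..m}.
           a i \<in> grid \<epsilon> \<union> {0} \<and> b i \<in> grid \<epsilon> \<union> {0} \<and>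
           x i = z + a i + b i \<and>
           (a i = 0 \<or> a i \<ge> \<epsilon>^3 * Max (x ` {1..m}) / 2) \<and>
           (b i = 0 \<or> b i \<ge> \<epsilon>^3 * Max (x ` {1..m}) / 2) \<and>
           a i \<le> \<epsilon> * z"
proof -
  obtain k where e: "\<epsilon> = 2 powi k"
    using assms(3) by blast
  have "(1::real) \<le> 2^(3*m) * (4 * real m)"
    using assms(1) one_le_power[of "2::real" "3*m"] mult_mono[of 1 "2^(3*m)" 1 "4 * real m"] by simp
  then have "\<epsilon> \<le> 1"
    using assms(2) divide_le_eq_1[of 1 "2^(3*m) * (4 * real m)"] by linarith
  then have N: "real (2 ^ nat (1 - 2 * k) :: nat) = 2 / \<epsilon>^2"
    using two_div_square_eq_power_of_two[OF e] by blast
  have bounds: "z \<le> x i \<and> x i \<le> Max (x ` {1..m})" if "i \<in> {1..m}" for i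
    using that assms(7) by (auto intro: order_trans[OF _ Min_le])
  show ?thesis
    by (rule bchoice2) (use grid_split[OF e N assms(4)] assms(5,6) bounds in blast)
qed

end
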